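(* For all $n,m\ge1$, $c_n\,c_m\le c_{n+m}$. More precisely, the map $\mathcal C_n(321)\times\mathcal C_m(321)\to\mathcal C_{n+m}(321)$, $(\tau,\sigma)\mapsto\theta^{-1}(\hat\tau\odot\hat\sigma)$, is injective.
   Context: Permutations are written in one-line notation. A permutation contains $321$ if there are $i<j<k$ with $\pi_i>\pi_j>\pi_k$. $\mathcal C_n$ is the set of cyclic permutations of $[n]$, $\mathcal C_n(321)$ those avoiding $321$, and $c_n=|\mathcal C_n(321)|$. The standard cycle notation of $\pi$ writes each cycle with its largest element first, as $(m,\pi(m),\pi^2(m),\dots)$, and lists cycles in increasing order of their largest elements. $\theta:S_n\to S_n$ erases the parentheses of the standard cycle notation to give a one-line word; $\hat\pi=\theta(\pi)$. For $\sigma\in\mathcal C_n(321)$, $\tau\in\mathcal C_m(321)$ and $k$ with $\hat\tau_k=1$: $\hat\tau\odot\hat\sigma=(\hat\tau_1+n)\cdots(\hat\tau_k+n)\,\hat\sigma_1\cdots\hat\sigma_n\,(\hat\tau_{k+1}+n)\cdots(\hat\tau_m+n)$; it is known (and may be used) that $\theta^{-1}(\hat\tau\odot\hat\sigma)\in\mathcal C_{n+m}(321)$. *)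

theory Defs
  imports Main
begin

text \<open>Permutations of [n] in one-line notation, as lists w with w!(i-1) = pi(i).\<close>

definition perms :: "nat \<Rightarrow> nat list set" where
  "perms n = {w. length w = n \<and> distinct w \<and> set w = {1..n}}"

definition papp :: "nat list \<Rightarrow> nat \<Rightarrow> nat" where
  "papp w i = (if 1 \<le> i \<and> i \<le> length w then w ! (i - 1) else i)"

definition contains321 :: "nat list \<Rightarrow> bool" where
  "contains321 w = (\<exists>i j k. i < j \<and> j < k \<and> k < length w \<and> w ! i > w ! j \<and> w ! j > w ! k)"

definition cyclic :: "nat list \<Rightarrow> bool" where
  "cyclic w = (\<forall>i \<in> {1..length w}. \<exists>k. (papp w ^^ k) (length w) = i)"

definition Cyc :: "nat \<Rightarrow> nat list set" where
  "Cyc n = {w \<in> perms n. cyclic w}"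

definition Cyc321 :: "nat \<Rightarrow> nat list set" where
  "Cyc321 n = {w \<in> Cyc n. \<not> contains321 w}"

definition cnum :: "nat \<Rightarrow> nat" where
  "cnum n = card (Cyc321 n)"

definition cyc_len :: "nat list \<Rightarrow> nat \<Rightarrow> nat" where
  "cyc_len w m = (LEAST k. 0 < k \<and> (papp w ^^ k) m = m)"

definition cyc_word :: "nat list \<Rightarrow> nat \<Rightarrow> nat list" where
  "cyc_word w m = map (\<lambda>k. (papp w ^^ k) m) [0..<cyc_len w m]"

definition is_cyc_max :: "nat list \<Rightarrow> nat \<Rightarrow> bool" where
  "is_cyc_max w m = (\<forall>k. (papp w ^^ k) m \<le> m)"

definition theta :: "nat list \<Rightarrow> nat list" where
  "theta w = concat (map (cyc_word w) (filter (is_cyc_max w) [1..<Suc (length w)]))"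

definition theta_inv :: "nat \<Rightarrow> nat list \<Rightarrow> nat list" where
  "theta_inv n u = the_inv_into (perms n) theta u"

text \<open>The operation tau-hat odot sigma-hat, with k the (1-based) position of 1 in tau-hat.\<close>
definition odot :: "nat list \<Rightarrow> nat list \<Rightarrow> nat list" where
  "odot th sh = (let k = Suc (LEAST i. i < length th \<and> th ! i = 1); n = length sh
     in map (\<lambda>x. x + n) (take k th) @ sh @ map (\<lambda>x. x + n) (drop k th))"

end

theory Submission
  imports Defs "HOL-Combinatorics.Orbits" "HOL-Library.Sublist"
begin

(*
  On a cyclic permutation p of [N], theta lists the single cycle of p starting at its maximum N.
  A permutation is determined by a list of one of its cycles through all of [N], so theta is
  injective on cyclic permutations and theta_inv N inverts it there.

  For tau in C_m and sigma in C_n, splicing the cycle of sigma into the cycle of tau shifted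
  by n, between n + 1 and tau(1) + n, gives a cyclic permutation glue tau sigma whose cycle
  is, up to rotation, tau-hat odot sigma-hat; hence
  theta_inv (n + m) (tau-hat odot sigma-hat) = glue tau sigma.
  A 321-pattern in glue tau sigma either consists of entries greater than n, which form a
  shifted copy of tau, or lies in the first n entries, an order-isomorphic copy of sigma.
  Finally odot is injective on such words: sigma-hat starts with n and every entry in front
  of it exceeds n.
*)

lemma perms_length: "p \<in> perms N \<Longrightarrow> length p = N"
  by (simp add: perms_def)

lemma papp_image:
  assumes len: "length p = N"
  shows "papp p ` {1..N} = set p"
proof -
  have "x \<in> papp p ` {1..N}" if "x \<in> set p" for x
  proof -
    obtain i where "i < N" "x = p ! i" using \<open>x \<in> set p\<close> len by (auto simp: in_set_conv_nth)
    then show ?thesis by (auto simp: papp_def len image_iff intro!: bexI[of _ "Suc i"])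
  qed
  then show ?thesis by (auto simp: papp_def len)
qed

lemma papp_permutes:
  assumes "p \<in> perms N"
  shows "papp p permutes {1..N}"
proof (rule bij_imp_permutes)
  have len: "length p = N" and dist: "distinct p" using assms by (auto simp: perms_def)
  have "inj_on (papp p) {1..N}"
    using dist by (auto simp: inj_on_def papp_def len nth_eq_iff_index_eq)
  then show "bij_betw (papp p) {1..N} {1..N}"
    using papp_image[OF len] assms by (simp add: bij_betw_def perms_def)
qed (auto simp: papp_def perms_length[OF assms])

lemma permutation_papp: "p \<in> perms N \<Longrightarrow> permutation (papp p)"
  using papp_permutes permutation_permutes by blast

lemma perms_eqI:
  assumes "p \<in> perms N" "q \<in> perms N" "\<forall>x\<in>{1..N}. papp p x = papp q x"
  shows "p = q"
proof (rule nth_equalityI)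
  show "length p = length q" using assms by (simp add: perms_length)
  fix i assume "i < length p"
  then show "p ! i = q ! i"
    using assms(3)[rule_format, of "Suc i"] perms_length[OF assms(1)] perms_length[OF assms(2)]
    by (simp add: papp_def)
qed

lemma finite_perms: "finite (perms N)"
proof (rule finite_subset)
  show "perms N \<subseteq> {xs. set xs \<subseteq> {1..N} \<and> length xs = N}" by (auto simp: perms_def)
qed (simp add: finite_lists_length_eq)

lemma finite_Cyc321: "finite (Cyc321 N)"
  by (rule finite_subset[OF _ finite_perms]) (auto simp: Cyc321_def Cyc_def)

section \<open>Cycles written as lists\<close>

lemma last_rotate_Suc:
  assumes j: "j < length w"
  shows "last (rotate (Suc j) w) = w ! j"
proof -
  have "last (rotate (Suc j) w) = rotate (Suc j) w ! (length w - 1)"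
    using j by (metis last_conv_nth length_rotate list.size(3) not_less_zero)
  also have "\<dots> = w ! ((Suc j + (length w - 1)) mod length w)"
    using j by (intro nth_rotate) auto
  also have "Suc j + (length w - 1) = j + length w"
    using j by simp
  finally show ?thesis using j by simp
qed

lemma last_not_in_butlast: "distinct xs \<Longrightarrow> last xs \<notin> set (butlast xs)"
  by (cases xs rule: rev_cases) auto

definition cycle_list :: "('a \<Rightarrow> 'a) \<Rightarrow> 'a list \<Rightarrow> bool" where
  "cycle_list f w \<longleftrightarrow> (\<forall>i<length w. f (w ! i) = w ! (Suc i mod length w))"

lemma cycle_list_funpow:
  assumes "cycle_list f w" "w \<noteq> []"
  shows "(f ^^ k) (hd w) = w ! (k mod length w)"
proof (induction k)
  case 0
  then show ?case using assms(2) by (simp add: hd_conv_nth)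
next
  case (Suc k)
  then show ?case
    using assms unfolding cycle_list_def by (simp add: mod_Suc_eq)
qed

lemma cycle_list_image:
  assumes cyc: "cycle_list f w"
  shows "f ` set w = set w"
proof -
  have "w ! j \<in> f ` set w" if j: "j < length w" for j
  proof -
    define i where "i = (if j = 0 then length w - 1 else j - 1)"
    have "i < length w" "Suc i mod length w = j"
      using j by (auto simp: i_def)
    then show ?thesis using cyc unfolding cycle_list_def by (metis imageI nth_mem)
  qed
  moreover have "f x \<in> set w" if "x \<in> set w" for x
    using that cyc unfolding cycle_list_def
    by (metis in_set_conv_nth length_pos_if_in_set mod_less_divisor nth_mem)
  ultimately show ?thesis by (auto simp: in_set_conv_nth)
qed

lemma cycle_list_unique: "cycle_list f w \<Longrightarrow> cycle_list g w \<Longrightarrow> x \<in> set w \<Longrightarrow> f x = g x"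
  unfolding cycle_list_def by (metis in_set_conv_nth)

lemma cycle_list_last: "cycle_list f w \<Longrightarrow> w \<noteq> [] \<Longrightarrow> f (last w) = hd w"
  by (simp add: cycle_list_def last_conv_nth hd_conv_nth)

lemma cycle_list_butlast_neq_hd:
  assumes "cycle_list f w" "distinct w" "x \<in> set (butlast w)"
  shows "f x \<noteq> hd w"
proof -
  obtain i where "i < length (butlast w)" "butlast w ! i = x"
    using assms(3) by (auto simp: in_set_conv_nth)
  then have i: "Suc i < length w" "x = w ! i" by (auto simp: nth_butlast)
  then have "f x = w ! Suc i" using assms(1) by (simp add: cycle_list_def)
  moreover have "w ! Suc i \<noteq> w ! 0"
    using i assms(2) nth_eq_iff_index_eq[of w "Suc i" 0] by fastforce
  moreover have "w \<noteq> []" using i by auto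
  ultimately show ?thesis by (simp add: hd_conv_nth)
qed

lemma cycle_list_rotate:
  assumes "cycle_list f w"
  shows "cycle_list f (rotate k w)"
  unfolding cycle_list_def
proof (intro allI impI)
  fix i assume i: "i < length (rotate k w)"
  then have "f (w ! ((k + i) mod length w)) = w ! (Suc ((k + i) mod length w) mod length w)"
    using assms i unfolding cycle_list_def by (metis length_rotate length_greater_0_conv
      list.size(3) mod_less_divisor not_less_zero)
  also have "\<dots> = w ! ((k + Suc i mod length w) mod length w)"
    by (simp add: mod_Suc_eq mod_add_right_eq)
  also have "\<dots> = rotate k w ! (Suc i mod length w)"
    using i by (intro nth_rotate[symmetric] mod_less_divisor) auto
  finally show "f (rotate k w ! i) = rotate k w ! (Suc i mod length (rotate k w))"
    using i by (simp add: nth_rotate)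
qed

lemma cycle_list_map:
  "cycle_list g w \<Longrightarrow> (\<forall>x\<in>set w. f (h x) = h (g x)) \<Longrightarrow> cycle_list f (map h w)"
  unfolding cycle_list_def
  by (metis length_map length_pos_if_in_set mod_less_divisor nth_map nth_mem)

lemma cycle_list_append:
  assumes g: "cycle_list g xs" and h: "cycle_list h ys" and ne: "xs \<noteq> []" "ys \<noteq> []"
    and fg: "\<forall>x\<in>set (butlast xs). f x = g x" and fh: "\<forall>y\<in>set (butlast ys). f y = h y"
    and xy: "f (last xs) = hd ys" and yx: "f (last ys) = hd xs"
  shows "cycle_list f (xs @ ys)"
  unfolding cycle_list_def
proof (intro allI impI)
  fix i assume i: "i < length (xs @ ys)"
  let ?L = "length xs" and ?w = "xs @ ys"
  consider "Suc i < ?L" | "Suc i = ?L" | "?L \<le> i" "Suc i < length ?w" | "Suc i = length ?w"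
    using i by linarith
  then show "f (?w ! i) = ?w ! (Suc i mod length ?w)"
  proof cases
    case 1
    then have "xs ! i \<in> set (butlast xs)"
      using nth_mem[of i "butlast xs"] by (simp add: nth_butlast)
    then show ?thesis
      using 1 fg g unfolding cycle_list_def by (simp add: nth_append)
  next
    case 2
    then have "i = ?L - 1" by simp
    then show ?thesis
      using 2 xy ne by (simp add: nth_append last_conv_nth hd_conv_nth)
  next
    case 3
    then have "ys ! (i - ?L) \<in> set (butlast ys)"
      using nth_mem[of "i - ?L" "butlast ys"] by (simp add: nth_butlast)
    then show ?thesis
      using 3 fh h unfolding cycle_list_def by (simp add: nth_append Suc_diff_le)
  next
    case 4
    moreover have "0 < length ys" using ne by simp
    ultimately have "i - ?L = length ys - 1" "\<not> i < ?L"
      unfolding length_append by linarith+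
    then show ?thesis
      using 4 yx ne by (simp add: nth_append last_conv_nth hd_conv_nth)
  qed
qed

section \<open>Cycle words and theta\<close>

lemma cyc_len_eq_funpow_dist1:
  assumes "p \<in> perms N"
  shows "cyc_len p x = funpow_dist1 (papp p) x x"
  unfolding cyc_len_def
proof (rule Least_equality)
  have "x \<in> orbit (papp p) x"
    using assms by (intro permutation_self_in_orbit permutation_papp)
  then have "(papp p ^^ funpow_dist1 (papp p) x x) x = x"
    by (rule funpow_dist1_prop)
  then show "0 < funpow_dist1 (papp p) x x \<and> (papp p ^^ funpow_dist1 (papp p) x x) x = x"
    by blast
next
  fix k assume "0 < k \<and> (papp p ^^ k) x = x"
  then show "funpow_dist1 (papp p) x x \<le> k"
    using funpow_dist1_least[of k "papp p" x x] by (meson not_le)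
qed

lemma cyc_word_eq: "p \<in> perms N \<Longrightarrow>
    cyc_word p x = map (\<lambda>k. (papp p ^^ k) x) [0..<funpow_dist1 (papp p) x x]"
  by (simp add: cyc_word_def cyc_len_eq_funpow_dist1)

lemma set_cyc_word: "p \<in> perms N \<Longrightarrow> set (cyc_word p x) = orbit (papp p) x"
  using orbit_conv_funpow_dist1[OF permutation_self_in_orbit[OF permutation_papp]]
  by (simp add: cyc_word_eq atLeast_upt del: upt_Suc)

lemma distinct_cyc_word: "p \<in> perms N \<Longrightarrow> distinct (cyc_word p x)"
  by (simp add: cyc_word_eq distinct_map inj_on_funpow_dist1 permutation_self_in_orbit
      permutation_papp atLeast_upt del: upt_Suc)

lemma hd_cyc_word: "p \<in> perms N \<Longrightarrow> hd (cyc_word p x) = x"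
  by (simp add: cyc_word_eq upt_conv_Cons del: upt_Suc)

lemma cyc_word_not_Nil: "p \<in> perms N \<Longrightarrow> cyc_word p x \<noteq> []"
  by (simp add: cyc_word_eq del: upt_Suc)

lemma cycle_list_cyc_word:
  assumes p: "p \<in> perms N"
  shows "cycle_list (papp p) (cyc_word p x)"
  unfolding cycle_list_def
proof (intro allI impI)
  fix i assume i: "i < length (cyc_word p x)"
  let ?L = "funpow_dist1 (papp p) x x"
  have "(papp p ^^ ?L) x = x"
    using p by (intro funpow_dist1_prop permutation_self_in_orbit permutation_papp)
  then have "(papp p ^^ Suc i) x = (papp p ^^ (Suc i mod ?L)) x"
    by (simp add: funpow_mod_eq)
  then show "papp p (cyc_word p x ! i) = cyc_word p x ! (Suc i mod length (cyc_word p x))"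
    using i p by (simp add: cyc_word_eq del: mod_Suc upt_Suc)
qed

lemma orbit_papp_subset: "p \<in> perms N \<Longrightarrow> x \<in> {1..N} \<Longrightarrow> orbit (papp p) x \<subseteq> {1..N}"
  by (intro permutes_orbit_subset papp_permutes)

lemma cyclic_iff_orbit:
  assumes "p \<in> perms N" "1 \<le> N"
  shows "cyclic p \<longleftrightarrow> orbit (papp p) N = {1..N}"
proof -
  have "orbit (papp p) N = {(papp p ^^ k) N | k. True}"
    using assms(1) by (simp add: orbit_altdef_permutation permutation_papp)
  then have "cyclic p \<longleftrightarrow> {1..N} \<subseteq> orbit (papp p) N"
    using assms(1) by (auto simp: cyclic_def perms_length)
  then show ?thesis
    using orbit_papp_subset[OF assms(1), of N] assms(2) by auto
qed

lemma theta_split: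
  assumes "p \<in> perms N" "1 \<le> N"
  shows "theta p = concat (map (cyc_word p) (filter (is_cyc_max p) [1..<N])) @ cyc_word p N"
proof -
  have "is_cyc_max p N"
    using orbit_papp_subset[OF assms(1), of N] assms(2)
    by (auto simp: is_cyc_max_def orbit_altdef_permutation permutation_papp[OF assms(1)])
  moreover have "[1..<Suc N] = [1..<N] @ [N]" using assms(2) by simp
  ultimately show ?thesis
    by (simp add: theta_def perms_length[OF assms(1)] del: upt_Suc)
qed

lemma theta_cyclic:
  assumes "p \<in> Cyc N" "1 \<le> N"
  shows "theta p = cyc_word p N"
proof -
  have p: "p \<in> perms N" and orb: "orbit (papp p) N = {1..N}"
    using assms cyclic_iff_orbit by (auto simp: Cyc_def)
  have "\<not> is_cyc_max p x" if x: "x \<in> {1..<N}" for x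
  proof -
    have "N \<in> orbit (papp p) x"
      using x orb orbit_swap permutation_self_in_orbit permutation_papp[OF p] by fastforce
    then obtain k where "(papp p ^^ k) x = N"
      by (auto simp: orbit_altdef_permutation permutation_papp[OF p])
    then show ?thesis using x by (auto simp: is_cyc_max_def intro!: exI[of _ k])
  qed
  then show ?thesis using theta_split[OF p assms(2)] by simp
qed

lemma theta_eq_cyc_word_if_hd:
  assumes "p \<in> perms N" "1 \<le> N" "hd (theta p) = N"
  shows "theta p = cyc_word p N"
proof (cases "filter (is_cyc_max p) [1..<N]")
  case (Cons x xs)
  then have "x < N" by (metis atLeastLessThan_iff filter_eq_ConsD in_set_conv_decomp set_upt)
  moreover have "hd (theta p) = x"
    using Cons theta_split[OF assms(1,2)] cyc_word_not_Nil[OF assms(1)] hd_cyc_word[OF assms(1)]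
    by simp
  ultimately show ?thesis using assms(3) by simp
qed (use theta_split[OF assms(1,2)] in simp)

definition standard_cycle :: "(nat \<Rightarrow> nat) \<Rightarrow> nat \<Rightarrow> nat list \<Rightarrow> bool" where
  "standard_cycle f N w \<longleftrightarrow> cycle_list f w \<and> distinct w \<and> set w = {1..N} \<and> hd w = N"

lemma theta_standard_cycle:
  assumes "p \<in> Cyc N" "1 \<le> N"
  shows "standard_cycle (papp p) N (theta p)"
proof -
  have p: "p \<in> perms N" and "cyclic p" using assms(1) by (auto simp: Cyc_def)
  then have "set (cyc_word p N) = {1..N}"
    using assms(2) by (simp add: set_cyc_word cyclic_iff_orbit)
  then show ?thesis
    unfolding standard_cycle_def theta_cyclic[OF assms]
    using p by (simp add: cycle_list_cyc_word distinct_cyc_word hd_cyc_word)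
qed

lemma theta_Cyc_length_hd_pos:
  assumes "p \<in> Cyc N" "1 \<le> N"
  shows "length (theta p) = N" "hd (theta p) = N" "0 \<notin> set (theta p)"
proof -
  have "distinct (theta p)" "set (theta p) = {1..N}" "hd (theta p) = N"
    using theta_standard_cycle[OF assms] by (simp_all add: standard_cycle_def)
  then show "length (theta p) = N" "hd (theta p) = N" "0 \<notin> set (theta p)"
    by (simp_all add: distinct_card[symmetric])
qed

lemma perms_if_cycle_list:
  assumes "length p = N" "cycle_list (papp p) w" "set w = {1..N}"
  shows "p \<in> perms N"
proof -
  have "set p = {1..N}"
    using papp_image[OF assms(1)] cycle_list_image[OF assms(2)] assms(3) by simp
  then show ?thesis
    using assms(1) by (simp add: perms_def card_distinct)
qed

lemma Cyc_if_standard_cycle: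
  assumes len: "length p = N" and N: "1 \<le> N" and w: "standard_cycle (papp p) N w"
  shows "p \<in> Cyc N \<and> theta p = w"
proof -
  have cyc: "cycle_list (papp p) w" and "distinct w" and set_w: "set w = {1..N}" and "hd w = N"
    using w by (auto simp: standard_cycle_def)
  then have len_w: "length w = N" by (metis card_atLeastAtMost diff_Suc_1 distinct_card)
  have p: "p \<in> perms N" using perms_if_cycle_list[OF len cyc set_w] .
  have orbit_w: "(papp p ^^ k) N = w ! k" if "k < N" for k
    using cycle_list_funpow[OF cyc] that len_w N \<open>hd w = N\<close> by fastforce
  have "set w \<subseteq> orbit (papp p) N"
    using orbit_w len_w
    by (auto simp: in_set_conv_nth orbit_altdef_permutation permutation_papp[OF p]) metis
  then have orb: "orbit (papp p) N = {1..N}"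
    using orbit_papp_subset[OF p, of N] N set_w by auto
  then have "p \<in> Cyc N" using p N by (simp add: Cyc_def cyclic_iff_orbit)
  moreover have "length (cyc_word p N) = N"
    using distinct_card[OF distinct_cyc_word[OF p, of N]] set_cyc_word[OF p, of N] orb by simp
  then have "cyc_word p N = w"
    using orbit_w len_w by (intro nth_equalityI) (auto simp: cyc_word_def)
  ultimately show ?thesis using theta_cyclic N by simp
qed

lemma theta_inv_theta:
  assumes "p \<in> Cyc N" "1 \<le> N"
  shows "theta_inv N (theta p) = p"
  unfolding theta_inv_def the_inv_into_def
proof (rule the_equality)
  show "p \<in> perms N \<and> theta p = theta p" using assms(1) by (simp add: Cyc_def)
next
  fix q assume q: "q \<in> perms N \<and> theta q = theta p"
  have p: "standard_cycle (papp p) N (theta p)" by (rule theta_standard_cycle[OF assms])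
  then have "theta q = cyc_word q N"
    using q assms(2) theta_eq_cyc_word_if_hd by (simp add: standard_cycle_def)
  then have "cycle_list (papp q) (theta p)" using q cycle_list_cyc_word by metis
  moreover have "cycle_list (papp p) (theta p)" "set (theta p) = {1..N}"
    using p by (auto simp: standard_cycle_def)
  ultimately show "q = p"
    using q assms(1) cycle_list_unique[of "papp q" "theta p" "papp p"]
    by (intro perms_eqI[of _ N]) (auto simp: Cyc_def)
qed

lemma inj_on_theta_Cyc: "1 \<le> N \<Longrightarrow> inj_on theta (Cyc N)"
  by (metis inj_onI theta_inv_theta)

section \<open>321-patterns as subsequences\<close>

lemma contains321_iff_subseq:
  "contains321 w \<longleftrightarrow> (\<exists>a b c. subseq [a, b, c] w \<and> b < a \<and> c < b)"
proof
  assume "contains321 w"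
  then obtain i j k where ijk: "i < j" "j < k" "k < length w" "w ! j < w ! i" "w ! k < w ! j"
    unfolding contains321_def by blast
  have "w ! i \<in> set (take j w)"
    using ijk by (auto simp: in_set_conv_nth intro!: exI[of _ i])
  moreover have "w ! k \<in> set (drop (Suc j) w)"
    using ijk by (auto simp: in_set_conv_nth intro!: exI[of _ "k - Suc j"])
  ultimately have "subseq ([w ! i] @ [w ! j, w ! k]) (take j w @ w ! j # drop (Suc j) w)"
    by (intro list_emb_append_mono) (simp_all add: subseq_singleton_left)
  then have "subseq [w ! i, w ! j, w ! k] w"
    using ijk by (simp add: Cons_nth_drop_Suc)
  then show "\<exists>a b c. subseq [a, b, c] w \<and> b < a \<and> c < b" using ijk by blast
next
  assume "\<exists>a b c. subseq [a, b, c] w \<and> b < a \<and> c < b"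
  then obtain a b c where abc: "subseq [a, b, c] w" "b < a" "c < b" by blast
  then obtain us vs us' vs' us'' vs'' where
    "w = us @ a # vs" "vs = us' @ b # vs'" "vs' = us'' @ c # vs''"
    by (blast dest!: list_emb_ConsD)
  then have "w ! length us = a" "w ! (length us + Suc (length us')) = b"
    "w ! (length us + Suc (length us') + Suc (length us'')) = c"
    "length us + Suc (length us') + Suc (length us'') < length w"
    by (simp_all add: nth_append)
  then show "contains321 w"
    unfolding contains321_def using abc
    by (intro exI[of _ "length us"] exI[of _ "length us + Suc (length us')"]
        exI[of _ "length us + Suc (length us') + Suc (length us'')"]) simp
qed

lemma subseq_snoc_append_notin:
  assumes "subseq (xs @ [x]) (ys @ zs)" "x \<notin> set zs"
  shows "subseq (xs @ [x]) ys"
  using assms(1)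
proof (cases rule: subseq_appendE)
  case (append us vs)
  show ?thesis
  proof (cases vs rule: rev_cases)
    case (snoc vs' v)
    then have "x \<in> set vs" using append(1) by simp
    then obtain y where "y \<in> set zs" "x = y" using list_emb_set[OF append(3)] by blast
    with assms(2) show ?thesis by simp
  qed (use append in simp)
qed

lemma contains321_map_strict_mono:
  assumes "strict_mono_on (set w) f" "contains321 (map f w)"
  shows "contains321 w"
proof -
  obtain i j k where ijk: "i < j" "j < k" "k < length w"
    "f (w ! j) < f (w ! i)" "f (w ! k) < f (w ! j)"
    using assms(2) unfolding contains321_def by auto
  then have "w ! j < w ! i" "w ! k < w ! j"
    using strict_mono_on_less[OF assms(1)] by (metis nth_mem order.strict_trans)+
  then show ?thesis unfolding contains321_def using ijk by blast
qed

section \<open>The operation odot\<close>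

lemma odot_eq_rotate:
  assumes "length b = n" "1 \<in> set a"
  obtains k0 where "k0 < length a" "a ! k0 = 1"
    "odot a b = rotate (n + (length a - Suc k0)) (b @ map (\<lambda>v. v + n) (rotate (Suc k0) a))"
proof
  define k0 where "k0 = (LEAST i. i < length a \<and> a ! i = 1)"
  show k0: "k0 < length a" "a ! k0 = 1"
    using LeastI_ex[of "\<lambda>i. i < length a \<and> a ! i = 1"] assms(2)
    by (auto simp: k0_def in_set_conv_nth)
  let ?h = "map (\<lambda>v. v + n)" and ?k = "Suc k0"
  have "rotate ?k a = drop ?k a @ take ?k a"
    using rotate_append[of "take ?k a" "drop ?k a"] k0 by simp
  then have "rotate (n + (length a - ?k)) (b @ ?h (rotate ?k a))
      = rotate (length (b @ ?h (drop ?k a))) ((b @ ?h (drop ?k a)) @ ?h (take ?k a))"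
    using assms(1) by simp
  also have "\<dots> = odot a b"
    unfolding rotate_append by (simp add: odot_def Let_def assms(1) k0_def)
  finally show "odot a b = rotate (n + (length a - ?k)) (b @ ?h (rotate ?k a))" ..
qed

lemma odot_inj:
  assumes len: "length b = n" "length b' = n" and hd: "hd b = n" "hd b' = n" and "1 \<le> n"
    and pos: "0 \<notin> set a" "0 \<notin> set a'"
    and eq: "odot a b = odot a' b'"
  shows "a = a' \<and> b = b'"
proof -
  let ?h = "map (\<lambda>v. v + n)"
  obtain k k' where split:
    "odot a b = ?h (take k a) @ b @ ?h (drop k a)"
    "odot a' b' = ?h (take k' a') @ b' @ ?h (drop k' a')"
    using len by (simp add: odot_def Let_def)
  have front: "takeWhile (\<lambda>v. n < v) (?h (take j x) @ c @ ys) = ?h (take j x)"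
    if "0 \<notin> set x" "length c = n" "hd c = n" for j x c ys
  proof -
    have "\<forall>v\<in>set (?h (take j x)). n < v"
      using that(1) by (auto dest: in_set_takeD intro: Nat.gr0I)
    then have "takeWhile (\<lambda>v. n < v) (?h (take j x) @ c @ ys)
        = ?h (take j x) @ takeWhile (\<lambda>v. n < v) (c @ ys)"
      by (intro takeWhile_append2) blast
    moreover have "takeWhile (\<lambda>v. n < v) (c @ ys) = []"
      using that(2,3) \<open>1 \<le> n\<close> by (cases c) auto
    ultimately show ?thesis by simp
  qed
  have front_eq: "?h (take k a) = ?h (take k' a')"
    using front[OF pos(1) len(1) hd(1)] front[OF pos(2) len(2) hd(2)] eq split by metis
  then have "b = b' \<and> ?h (drop k a) = ?h (drop k' a')"
    using eq split len by (simp add: append_eq_append_conv)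
  moreover have "?h a = ?h a'"
    using front_eq calculation by (metis append_take_drop_id map_append)
  then have "a = a'" by (simp add: inj_map_eq_map inj_on_def)
  ultimately show ?thesis by simp
qed

lemma inj_on_odot_theta:
  assumes "1 \<le> n" "1 \<le> m"
  shows "inj_on (\<lambda>(\<tau>, \<sigma>). odot (theta \<tau>) (theta \<sigma>)) (Cyc m \<times> Cyc n)"
proof (rule inj_onI, clarify)
  fix \<tau> \<sigma> \<tau>' \<sigma>'
  assume \<tau>: "\<tau> \<in> Cyc m" "\<tau>' \<in> Cyc m" and \<sigma>: "\<sigma> \<in> Cyc n" "\<sigma>' \<in> Cyc n"
    and eq: "odot (theta \<tau>) (theta \<sigma>) = odot (theta \<tau>') (theta \<sigma>')"
  note \<sigma>_facts =
    theta_Cyc_length_hd_pos[OF \<sigma>(1) assms(1)] theta_Cyc_length_hd_pos[OF \<sigma>(2) assms(1)]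
  note \<tau>_facts =
    theta_Cyc_length_hd_pos(3)[OF \<tau>(1) assms(2)] theta_Cyc_length_hd_pos(3)[OF \<tau>(2) assms(2)]
  have "theta \<tau> = theta \<tau>' \<and> theta \<sigma> = theta \<sigma>'"
    by (rule odot_inj[where n = n]) (use \<sigma>_facts \<tau>_facts eq assms(1) in simp_all)
  then show "\<tau> = \<tau>' \<and> \<sigma> = \<sigma>'"
    using inj_onD[OF inj_on_theta_Cyc[OF assms(2)] _ \<tau>]
      inj_onD[OF inj_on_theta_Cyc[OF assms(1)] _ \<sigma>]
    by blast
qed

section \<open>Gluing two cyclic permutations\<close>

definition glue :: "nat list \<Rightarrow> nat list \<Rightarrow> nat list" where
  "glue \<tau> \<sigma> = (let n = length \<sigma> in
     map (\<lambda>v. if v = n then hd \<tau> + n else v) \<sigma> @ n # map (\<lambda>v. v + n) (tl \<tau>))"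

lemma length_glue: "\<tau> \<noteq> [] \<Longrightarrow> length (glue \<tau> \<sigma>) = length \<sigma> + length \<tau>"
  by (simp add: glue_def Let_def)

lemma papp_glue_low:
  assumes "length \<sigma> = n" "x \<in> {1..n}"
  shows "papp (glue \<tau> \<sigma>) x = (if papp \<sigma> x = n then hd \<tau> + n else papp \<sigma> x)"
  using assms by (auto simp: glue_def papp_def nth_append)

lemma papp_glue_mid:
  assumes "length \<sigma> = n" "\<tau> \<noteq> []"
  shows "papp (glue \<tau> \<sigma>) (Suc n) = n"
  using assms by (simp add: glue_def papp_def nth_append Suc_le_eq)

lemma papp_glue_high:
  assumes "length \<sigma> = n" "length \<tau> = m" "z \<in> {2..m}"
  shows "papp (glue \<tau> \<sigma>) (z + n) = papp \<tau> z + n"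
proof -
  have "tl \<tau> ! (z - 2) = \<tau> ! (z - 1)"
    using assms by (cases \<tau>) (auto simp: nth_Cons' numeral_2_eq_2)
  then show ?thesis
    using assms by (auto simp: glue_def papp_def nth_append numeral_2_eq_2 Suc_diff_Suc)
qed

lemma theta_rotate_to_1:
  assumes \<tau>: "\<tau> \<in> Cyc m" and m: "1 \<le> m" and k0: "k0 < m" "theta \<tau> ! k0 = 1"
  defines "a \<equiv> rotate (Suc k0) (theta \<tau>)"
  shows "cycle_list (papp \<tau>) a \<and> distinct a \<and> set a = {1..m} \<and> last a = 1 \<and> hd a = hd \<tau>"
proof -
  have "cycle_list (papp \<tau>) (theta \<tau>)" "distinct (theta \<tau>)" "set (theta \<tau>) = {1..m}"
    using theta_standard_cycle[OF \<tau> m] by (auto simp: standard_cycle_def)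
  moreover have "length (theta \<tau>) = m"
    using calculation distinct_card by fastforce
  ultimately have cyc_a: "cycle_list (papp \<tau>) a" and "distinct a" "set a = {1..m}" "last a = 1"
    using k0 by (simp_all add: a_def cycle_list_rotate last_rotate_Suc del: rotate_Suc)
  moreover have "length \<tau> = m" using \<tau> by (simp add: Cyc_def perms_length)
  moreover have "a \<noteq> []" "\<tau> \<noteq> []" using calculation m by auto
  ultimately show ?thesis
    using cycle_list_last[OF cyc_a] m by (simp add: papp_def hd_conv_nth)
qed

lemma glue_cycle_list:
  assumes \<tau>: "\<tau> \<in> Cyc m" and \<sigma>: "\<sigma> \<in> Cyc n" and n: "1 \<le> n" and m: "1 \<le> m"
    and k0: "k0 < m" "theta \<tau> ! k0 = 1"
  shows "cycle_list (papp (glue \<tau> \<sigma>)) (theta \<sigma> @ map (\<lambda>v. v + n) (rotate (Suc k0) (theta \<tau>)))"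
proof -
  define a where "a = rotate (Suc k0) (theta \<tau>)"
  define b where "b = theta \<sigma>"
  have len: "length \<tau> = m" "length \<sigma> = n"
    using \<tau> \<sigma> by (auto simp: Cyc_def perms_def)
  have cyc_a: "cycle_list (papp \<tau>) a" and dist_a: "distinct a" and set_a: "set a = {1..m}"
    and last_a: "last a = 1" and hd_a: "hd a = hd \<tau>"
    using theta_rotate_to_1[OF \<tau> m k0] by (simp_all add: a_def)
  have "a \<noteq> []" "\<tau> \<noteq> []" using set_a len m by auto
  have cyc_b: "cycle_list (papp \<sigma>) b" and dist_b: "distinct b" and set_b: "set b = {1..n}"
    and hd_b: "hd b = n"
    using theta_standard_cycle[OF \<sigma> n] by (auto simp: b_def standard_cycle_def)
  have "b \<noteq> []" using set_b n by auto
  then have last_b: "papp \<sigma> (last b) = n" using cycle_list_last[OF cyc_b] hd_b by simp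
  show ?thesis
    unfolding a_def[symmetric] b_def[symmetric]
  proof (rule cycle_list_append[where g = "papp \<sigma>" and h = "\<lambda>x. papp \<tau> (x - n) + n"])
    show "cycle_list (\<lambda>x. papp \<tau> (x - n) + n) (map (\<lambda>v. v + n) a)"
      using cyc_a by (rule cycle_list_map) simp
    show "\<forall>x\<in>set (butlast b). papp (glue \<tau> \<sigma>) x = papp \<sigma> x"
    proof
      fix x assume x: "x \<in> set (butlast b)"
      then have "papp \<sigma> x \<noteq> n" using cycle_list_butlast_neq_hd[OF cyc_b dist_b x] hd_b by simp
      then show "papp (glue \<tau> \<sigma>) x = papp \<sigma> x"
        using x set_b papp_glue_low[OF len(2)] by (auto dest: in_set_butlastD)
    qed
    show "\<forall>y\<in>set (butlast (map (\<lambda>v. v + n) a)). papp (glue \<tau> \<sigma>) y = papp \<tau> (y - n) + n"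
    proof
      fix y assume "y \<in> set (butlast (map (\<lambda>v. v + n) a))"
      then obtain z where z: "z \<in> set (butlast a)" "y = z + n"
        by (auto simp: map_butlast[symmetric])
      then have "z \<in> set a" "z \<noteq> 1"
        using last_not_in_butlast[OF dist_a] last_a by (auto dest: in_set_butlastD)
      then have "z \<in> {2..m}" using set_a by auto
      then show "papp (glue \<tau> \<sigma>) y = papp \<tau> (y - n) + n"
        using z papp_glue_high[OF len(2,1)] by simp
    qed
    show "papp (glue \<tau> \<sigma>) (last b) = hd (map (\<lambda>v. v + n) a)"
      using last_b hd_a \<open>a \<noteq> []\<close> last_in_set[OF \<open>b \<noteq> []\<close>] set_b papp_glue_low[OF len(2)]
      by (simp add: hd_map)
    show "papp (glue \<tau> \<sigma>) (last (map (\<lambda>v. v + n) a)) = hd b"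
      using last_a hd_b \<open>a \<noteq> []\<close> papp_glue_mid[OF len(2) \<open>\<tau> \<noteq> []\<close>] by (simp add: last_map)
  qed (use \<open>a \<noteq> []\<close> \<open>b \<noteq> []\<close> cyc_b in auto)
qed

lemma glue_standard_cycle:
  assumes \<tau>: "\<tau> \<in> Cyc m" and \<sigma>: "\<sigma> \<in> Cyc n" and n: "1 \<le> n" and m: "1 \<le> m"
  shows "standard_cycle (papp (glue \<tau> \<sigma>)) (n + m) (odot (theta \<tau>) (theta \<sigma>))"
proof -
  define a where "a = theta \<tau>"
  define b where "b = theta \<sigma>"
  have dist_a: "distinct a" and set_a: "set a = {1..m}" and hd_a: "hd a = m"
    using theta_standard_cycle[OF \<tau> m] by (auto simp: a_def standard_cycle_def)
  have dist_b: "distinct b" and set_b: "set b = {1..n}"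
    using theta_standard_cycle[OF \<sigma> n] by (auto simp: b_def standard_cycle_def)
  have len_a: "length a = m" and len_b: "length b = n"
    using distinct_card dist_a set_a dist_b set_b by fastforce+
  have "1 \<in> set a" using set_a m by simp
  then obtain k0 where k0: "k0 < length a" "a ! k0 = 1" and odot_eq:
    "odot a b = rotate (n + (length a - Suc k0)) (b @ map (\<lambda>v. v + n) (rotate (Suc k0) a))"
    by (rule odot_eq_rotate[OF len_b])
  have shifted: "set (map (\<lambda>v. v + n) (rotate (Suc k0) a)) = {n + 1..n + m}"
    using set_a by (simp del: rotate_Suc add: add.commute[of _ n])
  have "cycle_list (papp (glue \<tau> \<sigma>)) (odot a b)"
    unfolding odot_eq using glue_cycle_list[OF \<tau> \<sigma> n m] k0 len_a
    by (intro cycle_list_rotate) (simp add: a_def b_def)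
  moreover have "distinct (odot a b)"
    unfolding odot_eq using dist_a dist_b set_b shifted
    by (auto simp del: rotate_Suc simp: distinct_map)
  moreover have "set (odot a b) = {1..n + m}"
    unfolding odot_eq using set_b shifted n by (auto simp del: rotate_Suc)
  moreover have "hd (odot a b) = n + m"
  proof -
    have "hd (map (\<lambda>v. v + n) (take (Suc k) a) @ rest) = hd a + n" for k rest
      using len_a m by (cases a) auto
    then show ?thesis using hd_a by (simp add: odot_def Let_def len_b)
  qed
  ultimately show ?thesis by (simp add: standard_cycle_def a_def b_def)
qed

lemma glue_Cyc:
  assumes "\<tau> \<in> Cyc m" "\<sigma> \<in> Cyc n" "1 \<le> n" "1 \<le> m"
  shows "glue \<tau> \<sigma> \<in> Cyc (n + m) \<and> theta (glue \<tau> \<sigma>) = odot (theta \<tau>) (theta \<sigma>)"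
proof (rule Cyc_if_standard_cycle[OF _ _ glue_standard_cycle[OF assms]])
  have "length \<tau> = m" "length \<sigma> = n" using assms(1,2) by (auto simp: Cyc_def perms_def)
  moreover have "\<tau> \<noteq> []" using calculation assms(4) by auto
  ultimately show "length (glue \<tau> \<sigma>) = n + m"
    by (simp add: length_glue)
qed (use assms in simp)

lemma theta_inv_odot_theta:
  assumes "\<tau> \<in> Cyc m" "\<sigma> \<in> Cyc n" "1 \<le> n" "1 \<le> m"
  shows "theta_inv (n + m) (odot (theta \<tau>) (theta \<sigma>)) = glue \<tau> \<sigma>"
  using glue_Cyc[OF assms] theta_inv_theta[of "glue \<tau> \<sigma>" "n + m"] assms(3) by simp

lemma filter_greater_replace_max:
  assumes "\<sigma> \<in> perms n" "1 \<le> n" "n < x"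
  shows "filter (\<lambda>v. n < v) (map (\<lambda>v. if v = n then x else v) \<sigma>) = [x]"
proof -
  have "n \<in> set \<sigma>" "distinct \<sigma>" "set \<sigma> = {1..n}" using assms(1,2) by (auto simp: perms_def)
  moreover obtain xs ys where "\<sigma> = xs @ n # ys"
    using split_list[OF \<open>n \<in> set \<sigma>\<close>] by blast
  ultimately have xs_ys: "\<sigma> = xs @ n # ys" "\<forall>v\<in>set xs \<union> set ys. v < n"
    by fastforce+
  have "filter (\<lambda>v. n < v) (map (\<lambda>v. if v = n then x else v) zs) = []" if "\<forall>v\<in>set zs. v < n" for zs
    using that by (auto simp: filter_empty_conv)
  then show ?thesis using xs_ys assms(3) by simp
qed

lemma glue_blocks:
  assumes \<sigma>: "\<sigma> \<in> perms n" "1 \<le> n" and \<tau>: "\<tau> \<in> perms m" "1 \<le> m"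
  defines "A \<equiv> map (\<lambda>v. if v = n then hd \<tau> + n else v) \<sigma>" and "B \<equiv> map (\<lambda>v. v + n) (tl \<tau>)"
  shows "glue \<tau> \<sigma> = (A @ [n]) @ B" "filter (\<lambda>v. n < v) A = [hd \<tau> + n]"
    "\<forall>v\<in>set B. n < v" "[hd \<tau> + n] @ B = map (\<lambda>v. v + n) \<tau>"
proof -
  have set_\<tau>: "set \<tau> = {1..m}" and "\<tau> \<noteq> []"
    using \<tau> by (auto simp: perms_def)
  show "glue \<tau> \<sigma> = (A @ [n]) @ B"
    using \<sigma> by (simp add: glue_def perms_length A_def B_def)
  show "\<forall>v\<in>set B. n < v"
    using set_\<tau> \<open>\<tau> \<noteq> []\<close> by (auto simp: B_def dest: list.set_sel(2))
  have "0 < hd \<tau>"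
    using set_\<tau> hd_in_set[OF \<open>\<tau> \<noteq> []\<close>] by auto
  then show "filter (\<lambda>v. n < v) A = [hd \<tau> + n]"
    unfolding A_def by (intro filter_greater_replace_max[OF \<sigma>]) simp
  show "[hd \<tau> + n] @ B = map (\<lambda>v. v + n) \<tau>"
    using \<open>\<tau> \<noteq> []\<close> by (cases \<tau>) (simp_all add: B_def)
qed

lemma glue_avoids_321:
  assumes \<sigma>: "\<sigma> \<in> perms n" "1 \<le> n" and \<tau>: "\<tau> \<in> perms m" "1 \<le> m"
    and av: "\<not> contains321 \<sigma>" "\<not> contains321 \<tau>"
  shows "\<not> contains321 (glue \<tau> \<sigma>)"
proof
  define f where "f v = (if v = n then hd \<tau> + n else v)" for v
  let ?A = "map f \<sigma>" and ?B = "map (\<lambda>v. v + n) (tl \<tau>)"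
  note blocks = glue_blocks[OF \<sigma> \<tau>, folded f_def]
  assume "contains321 (glue \<tau> \<sigma>)"
  then obtain a b c where abc: "subseq [a, b, c] ((?A @ [n]) @ ?B)" "b < a" "c < b"
    unfolding contains321_iff_subseq blocks(1) by blast
  have init: "subseq ([a, b] @ [c]) (?A @ [n])" if "c \<le> n"
  proof (rule subseq_snoc_append_notin)
    show "subseq ([a, b] @ [c]) ((?A @ [n]) @ ?B)" using abc(1) by simp
    show "c \<notin> set ?B" using blocks(3) that by auto
  qed
  consider "n < c" | "c < n" | "c = n" by linarith
  then show False
  proof cases
    case 1
    have "filter (\<lambda>v. n < v) ((?A @ [n]) @ ?B) = map (\<lambda>v. v + n) \<tau>"
      using blocks by simp
    then have "subseq [a, b, c] (map (\<lambda>v. v + n) \<tau>)"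
      using subseq_filter[OF abc(1), of "\<lambda>v. n < v"] 1 abc(2,3) by simp
    then have "contains321 (map (\<lambda>v. v + n) \<tau>)"
      using abc(2,3) contains321_iff_subseq by blast
    then show False
      using av(2) contains321_map_strict_mono[of \<tau> "\<lambda>v. v + n"] by (simp add: strict_mono_on_def)
  next
    case 2
    have "subseq ([a, b] @ [c]) ?A"
      by (rule subseq_snoc_append_notin[OF init]) (use 2 in auto)
    then have "contains321 ?A"
      unfolding contains321_iff_subseq using abc(2,3) by auto
    moreover have "strict_mono_on (set \<sigma>) f"
      using \<sigma>(1) by (auto simp: strict_mono_on_def f_def perms_def)
    ultimately show False
      using av(1) contains321_map_strict_mono by blast
  next
    case 3
    then have "subseq [a, b] ?A"
      using init subseq_append[of "[a, b]" "[n]" ?A] by simp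
    then have "subseq [a, b] [hd \<tau> + n]"
      using subseq_filter[of "[a, b]" ?A "\<lambda>v. n < v"] blocks(2) abc(2,3) 3 by simp
    then show False using list_emb_length by fastforce
  qed
qed

lemma glue_Cyc321:
  assumes "\<tau> \<in> Cyc321 m" "\<sigma> \<in> Cyc321 n" "1 \<le> n" "1 \<le> m"
  shows "glue \<tau> \<sigma> \<in> Cyc321 (n + m)"
proof -
  have "\<tau> \<in> Cyc m" "\<sigma> \<in> Cyc n" "\<not> contains321 \<tau>" "\<not> contains321 \<sigma>"
    using assms(1,2) by (simp_all add: Cyc321_def)
  then show ?thesis
    using glue_Cyc[of \<tau> m \<sigma> n] glue_avoids_321[of \<sigma> n \<tau> m] assms(3,4)
    by (simp add: Cyc321_def Cyc_def)
qed

theorem mainTheorem8: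
  fixes n m :: nat
  assumes "1 \<le> n" and "1 \<le> m"
  shows "cnum n * cnum m \<le> cnum (n + m)
    \<and> (\<lambda>(\<tau>, \<sigma>). theta_inv (n + m) (odot (theta \<tau>) (theta \<sigma>))) ` (Cyc321 m \<times> Cyc321 n) \<subseteq> Cyc321 (n + m)
    \<and> inj_on (\<lambda>(\<tau>, \<sigma>). theta_inv (n + m) (odot (theta \<tau>) (theta \<sigma>))) (Cyc321 m \<times> Cyc321 n)"
proof -
  let ?F = "\<lambda>(\<tau>, \<sigma>). theta_inv (n + m) (odot (theta \<tau>) (theta \<sigma>))"
  let ?D = "Cyc321 m \<times> Cyc321 n"
  have D: "?D \<subseteq> Cyc m \<times> Cyc n" by (auto simp: Cyc321_def)
  have F: "?F x = case_prod glue x" if "x \<in> ?D" for x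
    using that D assms theta_inv_odot_theta by auto
  have sub: "?F ` ?D \<subseteq> Cyc321 (n + m)"
    using F glue_Cyc321 assms by auto
  have "inj_on (theta \<circ> ?F) ?D"
  proof (rule inj_on_cong[THEN iffD2])
    show "inj_on (\<lambda>(\<tau>, \<sigma>). odot (theta \<tau>) (theta \<sigma>)) ?D"
      using inj_on_odot_theta[OF assms] D by (rule inj_on_subset)
    show "(theta \<circ> ?F) x = (\<lambda>(\<tau>, \<sigma>). odot (theta \<tau>) (theta \<sigma>)) x" if "x \<in> ?D" for x
      using that D F assms glue_Cyc by auto
  qed
  then have inj: "inj_on ?F ?D" by (rule inj_on_imageI2)
  have "card ?D \<le> card (Cyc321 (n + m))"
    using card_inj_on_le[OF inj sub finite_Cyc321] .
  then have "cnum n * cnum m \<le> cnum (n + m)"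
    by (simp add: cnum_def card_cartesian_product mult.commute)
  with sub inj show ?thesis by blast
qed

end
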